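(* Let $\alpha\ge0$ and $0\le\beta<1$. Let $f=h+\overline{g}\in\mathcal{W}_{\mathcal{H}}^0(\alpha,\beta)$ and let $\phi$ be analytic in $\mathbb{D}$ with $\phi(0)=0$, $\phi'(0)=1$ and $\Re\dfrac{\phi(z)}{z}>\dfrac12$ for all $z\in\mathbb{D}$. Then $f\,\widehat{*}\,\phi:=h*\phi+\overline{g*\phi}\in\mathcal{W}_{\mathcal{H}}^0(\alpha,\beta)$.
   Context: Let $\mathbb{D}=\{z\in\mathbb{C}:|z|<1\}$. $\mathcal{H}^0$ denotes the class of harmonic maps $f=h+\overline{g}$ on $\mathbb{D}$, with $h,g$ analytic in $\mathbb{D}$, $h(z)=z+\sum_{n\ge2}a_nz^n$ and $g(z)=\sum_{n\ge2}b_nz^n$. For $\alpha\ge0$, $0\le\beta<1$, $\mathcal{W}_{\mathcal{H}}^0(\alpha,\beta)$ denotes the class of $f=h+\overline{g}\in\mathcal{H}^0$ such that $\Re\big(h'(z)+\alpha zh''(z)-\beta\big)>|g'(z)+\alpha zg''(z)|$ for all $z\in\mathbb{D}$. For analytic $\psi_1(z)=\sum c_nz^n$, $\psi_2(z)=\sum d_nz^n$, the Hadamard product is $(\psi_1*\psi_2)(z)=\sum c_nd_nz^n$. *)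

theory Defs
  imports "HOL-Complex_Analysis.Complex_Analysis"
begin

definition taylor_coeff :: "(complex \<Rightarrow> complex) \<Rightarrow> nat \<Rightarrow> complex" where
  "taylor_coeff f n = (deriv ^^ n) f 0 / of_nat (fact n)"

definition hadamard :: "(complex \<Rightarrow> complex) \<Rightarrow> (complex \<Rightarrow> complex) \<Rightarrow> complex \<Rightarrow> complex" where
  "hadamard p q = (\<lambda>z. \<Sum>n. taylor_coeff p n * taylor_coeff q n * z ^ n)"

text \<open>A harmonic map is represented by the pair (h, g) of its analytic parts.\<close>
definition in_H0 :: "(complex \<Rightarrow> complex) \<Rightarrow> (complex \<Rightarrow> complex) \<Rightarrow> bool" where
  "in_H0 h g \<longleftrightarrow> h holomorphic_on ball 0 1 \<and> g holomorphic_on ball 0 1 \<and>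
     h 0 = 0 \<and> deriv h 0 = 1 \<and> g 0 = 0 \<and> deriv g 0 = 0"

definition W_H0 :: "real \<Rightarrow> real \<Rightarrow> (complex \<Rightarrow> complex) \<Rightarrow> (complex \<Rightarrow> complex) \<Rightarrow> bool" where
  "W_H0 \<alpha> \<beta> h g \<longleftrightarrow> in_H0 h g \<and>
     (\<forall>z\<in>ball 0 1.
        Re (deriv h z + of_real \<alpha> * z * deriv (deriv h) z - of_real \<beta>)
          > cmod (deriv g z + of_real \<alpha> * z * deriv (deriv g) z))"

end

theory Submission
  imports Defs
begin

text \<open>
  Write \<open>D f = f' + \<alpha> z f''\<close> and \<open>S(z) = \<phi>(z)/z\<close>, so that \<open>S(0) = 1\<close> and \<open>Re S > 1/2\<close>.
  On coefficients \<open>D (h \<star> \<phi>) = D h \<star> S\<close>, where \<open>\<star>\<close> is the Hadamard product. Fix z and put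
  \<open>P = D h + \<epsilon> D g\<close> with \<open>|\<epsilon>| \<le> 1\<close> chosen so that \<open>\<epsilon> (D g \<star> S)(z) = -|(D g \<star> S)(z)|\<close>; the
  hypothesis on f gives \<open>Re P > \<beta>\<close>, and the claim at z becomes \<open>Re (P \<star> S)(z) > \<beta>\<close>.
  For \<open>|z| < \<rho> < 1\<close>, \<open>(P \<star> S)(z)\<close> is the mean of \<open>P(z e\<^sup>-\<^sup>i\<^sup>t / \<rho>)\<close> against the weight
  \<open>2 Re S(\<rho> e\<^sup>i\<^sup>t) - 1\<close>, which is positive, has mean 1 and Fourier coefficients \<open>s\<^sub>n \<rho>\<^sup>n\<close>
  (this is where \<open>s\<^sub>0 = 1\<close> enters). Hence \<open>Re (P \<star> S)(z) > \<beta>\<close>.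
\<close>

lemma has_integral_exp_int_circle:
  fixes k :: int
  shows "((\<lambda>t::real. exp (\<i> * of_int k * of_real t)) has_integral (if k = 0 then 2 * pi else 0)) {0..2*pi}"
proof (cases "k = 0")
  case True
  then show ?thesis
    using has_integral_const_real[of "1::complex" 0 "2*pi"] by (simp add: scaleR_conv_of_real)
next
  case False
  have "((\<lambda>t::real. exp (\<i> * of_int k * of_real t) / (\<i> * of_int k)) has_vector_derivative
          exp (\<i> * of_int k * of_real t)) (at t within {0..2*pi})" for t
  proof -
    have "((\<lambda>x. exp (\<i> * of_int k * x) / (\<i> * of_int k)) has_field_derivative exp (\<i> * of_int k * of_real t))
            (at (of_real t))"
      using False by (auto intro!: derivative_eq_intros simp: field_simps)
    then show ?thesis by (rule has_vector_derivative_real_field)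
  qed
  then have "((\<lambda>t::real. exp (\<i> * of_int k * of_real t)) has_integral
          (exp (\<i> * of_int k * of_real (2*pi)) / (\<i> * of_int k)
            - exp (\<i> * of_int k * of_real 0) / (\<i> * of_int k))) {0..2*pi}"
    by (intro fundamental_theorem_of_calculus) auto
  moreover have "exp (\<i> * of_int k * of_real (2*pi)) = 1"
    using exp_integer_2pi[of "of_int k"] by (simp add: mult_ac)
  ultimately show ?thesis using False by simp
qed

lemma has_integral_suminf_Weierstrass:
  fixes f :: "nat \<Rightarrow> real \<Rightarrow> 'a::banach"
  assumes cont: "\<And>k. continuous_on {a..b} (f k)"
    and bound: "\<And>k t. t \<in> {a..b} \<Longrightarrow> norm (f k t) \<le> M k" and "summable M"
    and int: "\<And>k. (f k has_integral I k) {a..b}"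
  shows "summable I" and "((\<lambda>t. \<Sum>k. f k t) has_integral (\<Sum>k. I k)) {a..b}"
proof -
  have "uniform_limit {a..b} (\<lambda>n t. \<Sum>k<n. f k t) (\<lambda>t. \<Sum>k. f k t) sequentially"
    by (rule Weierstrass_m_test[OF bound \<open>summable M\<close>])
  moreover have "continuous_on {a..b} (\<lambda>t. \<Sum>k<n. f k t)" for n
    by (intro continuous_on_sum cont)
  ultimately obtain J L where J: "\<And>n. ((\<lambda>t. \<Sum>k<n. f k t) has_integral J n) {a..b}"
    and L: "((\<lambda>t. \<Sum>k. f k t) has_integral L) {a..b}" and "J \<longlonglongrightarrow> L"
    by (rule uniform_limit_integral) auto
  have "J n = (\<Sum>k<n. I k)" for n
    using J[of n] has_integral_sum[of "{..<n}" f I, OF _ int] by (auto intro: has_integral_unique)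
  then have "J = (\<lambda>n. \<Sum>k<n. I k)"
    by (rule ext)
  then have "I sums L"
    using \<open>J \<longlonglongrightarrow> L\<close> unfolding sums_def by simp
  then show "summable I" and "((\<lambda>t. \<Sum>k. f k t) has_integral (\<Sum>k. I k)) {a..b}"
    using L by (auto simp: sums_iff)
qed

lemma has_integral_pos_continuous:
  fixes f :: "real \<Rightarrow> real"
  assumes "a < b" and "continuous_on {a..b} f" and "\<And>t. t \<in> {a..b} \<Longrightarrow> f t > 0"
    and "(f has_integral I) {a..b}"
  shows "I > 0"
proof -
  obtain t0 where t0: "t0 \<in> {a..b}" and min: "\<And>t. t \<in> {a..b} \<Longrightarrow> f t0 \<le> f t"
    using continuous_attains_inf[OF compact_Icc _ assms(2)] assms(1) by auto
  have "((\<lambda>t. f t0) has_integral (b - a) * f t0) {a..b}"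
    using has_integral_const_real[of "f t0" a b] assms(1) by simp
  then have "(b - a) * f t0 \<le> I"
    using min by (rule has_integral_le[OF _ assms(4)])
  moreover have "(b - a) * f t0 > 0"
    using assms(1,3) t0 by simp
  ultimately show ?thesis by simp
qed

lemma has_integral_eval_fps_circle:
  fixes F :: "complex fps" and m :: int
  assumes "0 \<le> \<rho>" and "ereal \<rho> < fps_conv_radius F"
  shows "((\<lambda>t. eval_fps F (of_real \<rho> * exp (\<i> * of_real t)) * exp (- \<i> * of_int m * of_real t))
           has_integral (if 0 \<le> m then 2 * pi * fps_nth F (nat m) * of_real \<rho> ^ nat m else 0)) {0..2*pi}"
proof -
  define f where "f k t = fps_nth F k * of_real \<rho> ^ k * exp (\<i> * of_int (int k - m) * of_real t)" for k t
  have summable: "summable (\<lambda>k. norm (fps_nth F k * of_real \<rho> ^ k))"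
    using assms by (intro norm_summable_fps) auto
  have integral: "(f k has_integral fps_nth F k * of_real \<rho> ^ k * (if int k - m = 0 then 2 * pi else 0)) {0..2*pi}"
    for k unfolding f_def by (intro has_integral_mult_right has_integral_exp_int_circle)
  have "((\<lambda>t. \<Sum>k. f k t) has_integral
          (\<Sum>k. fps_nth F k * of_real \<rho> ^ k * (if int k - m = 0 then 2 * pi else 0))) {0..2*pi}"
  proof (rule has_integral_suminf_Weierstrass(2)[OF _ _ summable integral])
    show "continuous_on {0..2*pi} (f k)" for k
      unfolding f_def by (intro continuous_intros)
    show "norm (f k t) \<le> norm (fps_nth F k * of_real \<rho> ^ k)" for k t
      by (simp add: f_def norm_mult norm_exp_eq_Re)
  qed
  moreover have "(\<Sum>k. fps_nth F k * of_real \<rho> ^ k * (if int k - m = 0 then 2 * pi else 0))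
      = (if 0 \<le> m then 2 * pi * fps_nth F (nat m) * of_real \<rho> ^ nat m else 0)"
  proof (cases "0 \<le> m")
    case True
    then have "(\<lambda>k. fps_nth F k * of_real \<rho> ^ k * (if int k - m = 0 then 2 * pi else 0))
        = (\<lambda>k. if k = nat m then 2 * pi * fps_nth F k * of_real \<rho> ^ k else 0)"
      by (auto simp: fun_eq_iff)
    then show ?thesis
      using True sums_unique[OF sums_single[of "nat m" "\<lambda>k. 2 * pi * fps_nth F k * of_real \<rho> ^ k"]]
      by simp
  qed auto
  moreover have "(\<Sum>k. f k t) = eval_fps F (of_real \<rho> * exp (\<i> * of_real t)) * exp (- \<i> * of_int m * of_real t)" for t
  proof -
    have "f k t = fps_nth F k * (of_real \<rho> * exp (\<i> * of_real t)) ^ k * exp (- \<i> * of_int m * of_real t)" for k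
      by (simp add: f_def power_mult_distrib exp_of_nat_mult[symmetric] exp_add[symmetric] algebra_simps)
    moreover have "summable (\<lambda>k. fps_nth F k * (of_real \<rho> * exp (\<i> * of_real t)) ^ k)"
      using assms by (intro sums_summable[OF sums_eval_fps]) (simp add: norm_mult)
    ultimately show ?thesis
      by (simp add: eval_fps_def suminf_mult2)
  qed
  ultimately show ?thesis by simp
qed

lemma has_integral_Re_weight_circle:
  fixes S :: "complex fps" and n :: nat
  assumes "0 \<le> \<rho>" and "ereal \<rho> < fps_conv_radius S" and "fps_nth S 0 = 1"
  shows "((\<lambda>t. of_real (2 * Re (eval_fps S (of_real \<rho> * exp (\<i> * of_real t))) - 1)
                * exp (- \<i> * of_nat n * of_real t))
           has_integral 2 * pi * fps_nth S n * of_real \<rho> ^ n) {0..2*pi}"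
proof -
  define \<sigma> where "\<sigma> t = eval_fps S (of_real \<rho> * exp (\<i> * of_real t))" for t
  define e where "e = (\<lambda>t. exp (- \<i> * of_nat n * of_real t))"
  have "((\<lambda>t. \<sigma> t * e t) has_integral 2 * pi * fps_nth S n * of_real \<rho> ^ n) {0..2*pi}"
    using has_integral_eval_fps_circle[OF assms(1,2), of "int n"] by (simp add: \<sigma>_def e_def)
  moreover have "cnj (if 0 \<le> - int n then 2 * pi * fps_nth S (nat (- int n)) * of_real \<rho> ^ nat (- int n) else 0)
      = (if n = 0 then 2 * pi else 0)"
    using assms(3) by simp
  with has_integral_cnj[THEN iffD2, OF has_integral_eval_fps_circle[OF assms(1,2), of "- int n"]]
  have "((\<lambda>t. cnj (\<sigma> t * exp (- \<i> * of_int (- int n) * of_real t))) has_integral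
                   (if n = 0 then 2 * pi else 0)) {0..2*pi}"
    unfolding \<sigma>_def o_def by simp
  moreover have "(e has_integral (if n = 0 then 2 * pi else 0)) {0..2*pi}"
    using has_integral_exp_int_circle[of "- int n"] unfolding e_def by simp
  ultimately have "((\<lambda>t. \<sigma> t * e t + cnj (\<sigma> t * exp (- \<i> * of_int (- int n) * of_real t)) - e t)
      has_integral 2 * pi * fps_nth S n * of_real \<rho> ^ n + (if n = 0 then 2 * pi else 0) - (if n = 0 then 2 * pi else 0))
      {0..2*pi}"
    by (intro has_integral_diff has_integral_add)
  moreover have "(\<lambda>t. \<sigma> t * e t + cnj (\<sigma> t * exp (- \<i> * of_int (- int n) * of_real t)) - e t)
      = (\<lambda>t. of_real (2 * Re (\<sigma> t) - 1) * e t)"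
  proof
    fix t
    have "\<sigma> t * e t + cnj (\<sigma> t * exp (- \<i> * of_int (- int n) * of_real t)) - e t
        = (\<sigma> t + cnj (\<sigma> t) - 1) * e t"
      by (simp add: e_def exp_cnj algebra_simps)
    then show "\<sigma> t * e t + cnj (\<sigma> t * exp (- \<i> * of_int (- int n) * of_real t)) - e t
        = of_real (2 * Re (\<sigma> t) - 1) * e t"
      by (simp add: complex_add_cnj)
  qed
  ultimately show ?thesis
    unfolding \<sigma>_def e_def add_diff_cancel_right' by (simp only:)
qed

lemma ereal_less_fps_conv_radius:
  assumes "fps_conv_radius F \<ge> 1" and "x < 1"
  shows "ereal x < fps_conv_radius F"
proof -
  have "ereal x < 1"
    using assms(2) by simp
  then show ?thesis
    using assms(1) by (rule order.strict_trans2)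
qed

lemma eval_fps_add_cmult:
  fixes A B :: "'a::{banach, real_normed_div_algebra, comm_ring_1} fps"
  assumes "norm z < fps_conv_radius A" and "norm z < fps_conv_radius B"
  shows "eval_fps (A + fps_const c * B) z = eval_fps A z + c * eval_fps B z"
proof -
  have "norm z < fps_conv_radius (fps_const c * B)"
    using assms(2) fps_conv_radius_mult[of "fps_const c" B] by (simp add: order.strict_trans2)
  then show ?thesis
    using assms by (simp add: eval_fps_add eval_fps_mult)
qed

definition fps_hadamard :: "'a::times fps \<Rightarrow> 'a fps \<Rightarrow> 'a fps" where
  "fps_hadamard A B = Abs_fps (\<lambda>n. fps_nth A n * fps_nth B n)"

lemma fps_hadamard_nth [simp]: "fps_nth (fps_hadamard A B) n = fps_nth A n * fps_nth B n"
  by (simp add: fps_hadamard_def)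

lemma fps_conv_radius_hadamard:
  fixes A B :: "'a::{banach, real_normed_div_algebra} fps"
  assumes "fps_conv_radius A \<ge> 1" and "fps_conv_radius B \<ge> 1"
  shows "fps_conv_radius (fps_hadamard A B) \<ge> 1"
  unfolding fps_conv_radius_def
proof (rule conv_radius_geI_ex')
  fix r :: real
  assume r: "0 < r" "ereal r < 1"
  define q where "q = sqrt r"
  have q: "0 < q" "q < 1" "r = q * q"
    using r by (auto simp: q_def)
  have "ereal (norm (of_real q :: 'a)) < 1"
    using q by simp
  then have "ereal (norm (of_real q :: 'a)) < fps_conv_radius A"
    and "ereal (norm (of_real q :: 'a)) < fps_conv_radius B"
    using assms order.strict_trans2 by blast+
  then have summable_A: "summable (\<lambda>n. norm (fps_nth A n * of_real q ^ n))"
    and summable_B: "summable (\<lambda>n. norm (fps_nth B n * of_real q ^ n))"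
    by (auto intro: norm_summable_fps)
  obtain K where K: "\<And>n. norm (fps_nth B n * of_real q ^ n) \<le> K"
    using summable_LIMSEQ_zero[OF summable_B, THEN convergentI, THEN convergent_imp_Bseq]
    by (auto simp: Bseq_def)
  have "norm (fps_nth (fps_hadamard A B) n * of_real r ^ n) \<le> norm (fps_nth A n * of_real q ^ n) * K" for n
  proof -
    have "norm (fps_nth (fps_hadamard A B) n * of_real r ^ n)
        = norm (fps_nth A n * of_real q ^ n) * norm (fps_nth B n * of_real q ^ n)"
      using q by (simp add: norm_mult norm_power power_mult_distrib)
    also have "\<dots> \<le> norm (fps_nth A n * of_real q ^ n) * K"
      using K by (simp add: mult_left_mono)
    finally show ?thesis .
  qed
  then have "summable (\<lambda>n. norm (fps_nth (fps_hadamard A B) n * of_real r ^ n))"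
    by (intro summable_comparison_test[OF _ summable_mult2[OF summable_A]]) auto
  then show "summable (\<lambda>n. fps_nth (fps_hadamard A B) n * of_real r ^ n)"
    by (rule summable_norm_cancel)
qed

lemma has_integral_hadamard_circle:
  fixes P S :: "complex fps"
  assumes "0 < \<rho>" and S: "ereal \<rho> < fps_conv_radius S" and "fps_nth S 0 = 1"
    and P: "ereal (norm z / \<rho>) < fps_conv_radius P"
  shows "((\<lambda>t. of_real (2 * Re (eval_fps S (of_real \<rho> * exp (\<i> * of_real t))) - 1)
                * eval_fps P (z / of_real \<rho> * exp (- \<i> * of_real t)))
           has_integral 2 * pi * eval_fps (fps_hadamard P S) z) {0..2*pi}"
proof -
  define W where "W t = 2 * Re (eval_fps S (of_real \<rho> * exp (\<i> * of_real t))) - 1" for t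
  define x where "x = z / of_real \<rho>"
  define f where "f n t = fps_nth P n * x ^ n * (of_real (W t) * exp (- \<i> * of_nat n * of_real t))" for n t
  have "(\<lambda>t. of_real \<rho> * exp (\<i> * of_real t)) ` {0..2*pi} \<subseteq> eball 0 (fps_conv_radius S)"
    using S \<open>0 < \<rho>\<close> by (auto simp: norm_mult)
  then have cont_W: "continuous_on {0..2*pi} W"
    unfolding W_def by (intro continuous_intros)
  then obtain B where B: "\<And>t. t \<in> {0..2*pi} \<Longrightarrow> norm (W t) \<le> B"
    using compact_imp_bounded[OF compact_continuous_image[OF cont_W compact_Icc]]
    unfolding bounded_iff by blast
  have summable: "summable (\<lambda>n. B * norm (fps_nth P n * x ^ n))"
    using P \<open>0 < \<rho>\<close> by (intro summable_mult norm_summable_fps) (simp add: x_def norm_divide)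
  have "(f n has_integral fps_nth P n * x ^ n * (2 * pi * fps_nth S n * of_real \<rho> ^ n)) {0..2*pi}" for n
    unfolding f_def W_def
    using has_integral_Re_weight_circle[OF _ S \<open>fps_nth S 0 = 1\<close>] \<open>0 < \<rho>\<close>
    by (intro has_integral_mult_right) simp
  then have integral: "(f n has_integral 2 * pi * (fps_nth (fps_hadamard P S) n * z ^ n)) {0..2*pi}" for n
    using \<open>0 < \<rho>\<close> by (simp add: x_def power_divide mult_ac)
  have cont_f: "continuous_on {0..2*pi} (f n)" for n
    unfolding f_def by (intro continuous_intros cont_W)
  have bound_f: "norm (f n t) \<le> B * norm (fps_nth P n * x ^ n)" if "t \<in> {0..2*pi}" for n t
    using B[OF that] by (simp add: f_def norm_mult norm_exp_eq_Re mult_ac mult_right_mono)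
  note series = has_integral_suminf_Weierstrass[OF cont_f bound_f summable integral]
  from series(2) have "((\<lambda>t. \<Sum>n. f n t) has_integral 2 * pi * eval_fps (fps_hadamard P S) z) {0..2*pi}"
    using series(1) by (simp add: eval_fps_def suminf_mult)
  moreover have "(\<Sum>n. f n t) = of_real (W t) * eval_fps P (x * exp (- \<i> * of_real t))" for t
  proof -
    have "f n t = of_real (W t) * (fps_nth P n * (x * exp (- \<i> * of_real t)) ^ n)" for n
      by (simp add: f_def power_mult_distrib exp_of_nat_mult[symmetric] mult_ac)
    moreover have "summable (\<lambda>n. fps_nth P n * (x * exp (- \<i> * of_real t)) ^ n)"
      using P \<open>0 < \<rho>\<close> by (intro sums_summable[OF sums_eval_fps]) (simp add: x_def norm_mult norm_divide)
    ultimately show ?thesis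
      by (simp add: eval_fps_def suminf_mult)
  qed
  ultimately show ?thesis
    by (simp add: W_def x_def)
qed

lemma Re_eval_fps_hadamard_gt:
  fixes P S :: "complex fps" and \<beta> :: real
  assumes "fps_conv_radius P \<ge> 1" and "fps_conv_radius S \<ge> 1" and "fps_nth S 0 = 1"
    and P: "\<And>w. norm w < 1 \<Longrightarrow> Re (eval_fps P w) > \<beta>"
    and S: "\<And>w. norm w < 1 \<Longrightarrow> Re (eval_fps S w) > 1/2"
    and "norm z < 1"
  shows "Re (eval_fps (fps_hadamard P S) z) > \<beta>"
proof -
  define \<rho> where "\<rho> = (1 + norm z) / 2"
  have "0 < \<rho>" "\<rho> < 1" "norm z < \<rho>"
    using \<open>norm z < 1\<close> norm_ge_zero[of z] unfolding \<rho>_def by (simp_all add: field_simps add_pos_nonneg)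
  then have \<rho>: "0 < \<rho>" "\<rho> < 1" "norm z / \<rho> < 1"
    by simp_all
  then have radius: "ereal \<rho> < fps_conv_radius S" "ereal (norm z / \<rho>) < fps_conv_radius P"
    using assms(1,2) by (simp_all add: ereal_less_fps_conv_radius)
  define W where "W = (\<lambda>t. 2 * Re (eval_fps S (of_real \<rho> * exp (\<i> * of_real t))) - 1)"
  define Q where "Q t = eval_fps P (z / of_real \<rho> * exp (- \<i> * of_real t))" for t
  have "(W has_integral 2 * pi) {0..2*pi}"
    using has_integral_linear[OF has_integral_Re_weight_circle[OF _ radius(1) assms(3), of 0] bounded_linear_Re]
      \<rho> assms(3) by (simp add: W_def o_def)
  moreover have "((\<lambda>t. W t * Re (Q t)) has_integral 2 * pi * Re (eval_fps (fps_hadamard P S) z)) {0..2*pi}"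
    using has_integral_linear[OF has_integral_hadamard_circle[OF \<rho>(1) radius(1) assms(3) radius(2)] bounded_linear_Re]
    by (simp add: W_def Q_def o_def)
  ultimately have "((\<lambda>t. W t * Re (Q t) - \<beta> * W t) has_integral
      2 * pi * Re (eval_fps (fps_hadamard P S) z) - \<beta> * (2 * pi)) {0..2*pi}"
    by (intro has_integral_diff has_integral_mult_right)
  moreover have "(\<lambda>t. W t * Re (Q t) - \<beta> * W t) = (\<lambda>t. W t * (Re (Q t) - \<beta>))"
    and "2 * pi * Re (eval_fps (fps_hadamard P S) z) - \<beta> * (2 * pi)
         = 2 * pi * (Re (eval_fps (fps_hadamard P S) z) - \<beta>)"
    by (auto simp: algebra_simps)
  ultimately have "((\<lambda>t. W t * (Re (Q t) - \<beta>)) has_integral 2 * pi * (Re (eval_fps (fps_hadamard P S) z) - \<beta>))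
      {0..2*pi}"
    by (simp only:)
  then have "2 * pi * (Re (eval_fps (fps_hadamard P S) z) - \<beta>) > 0"
  proof (rule has_integral_pos_continuous[rotated 3])
    have "(\<lambda>t. of_real \<rho> * exp (\<i> * of_real t)) ` {0..2*pi} \<subseteq> eball 0 (fps_conv_radius S)"
      and "(\<lambda>t. z / of_real \<rho> * exp (- \<i> * of_real t)) ` {0..2*pi} \<subseteq> eball 0 (fps_conv_radius P)"
      using radius \<rho> by (auto simp: norm_mult norm_divide)
    then show "continuous_on {0..2*pi} (\<lambda>t. W t * (Re (Q t) - \<beta>))"
      unfolding W_def Q_def by (intro continuous_intros)
    show "W t * (Re (Q t) - \<beta>) > 0" for t
      using S[of "of_real \<rho> * exp (\<i> * of_real t)"] P[of "z / of_real \<rho> * exp (- \<i> * of_real t)"] \<rho>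
      by (simp add: W_def Q_def norm_mult norm_divide)
  qed simp
  then show ?thesis by (simp add: zero_less_mult_iff)
qed

lemma fps_hadamard_dominated:
  fixes A B S :: "complex fps" and \<beta> :: real
  assumes "fps_conv_radius A \<ge> 1" and "fps_conv_radius B \<ge> 1"
    and "fps_conv_radius S \<ge> 1" and "fps_nth S 0 = 1"
    and S: "\<And>w. norm w < 1 \<Longrightarrow> Re (eval_fps S w) > 1/2"
    and dominated: "\<And>w. norm w < 1 \<Longrightarrow> cmod (eval_fps B w) < Re (eval_fps A w) - \<beta>"
    and "norm z < 1"
  shows "cmod (eval_fps (fps_hadamard B S) z) < Re (eval_fps (fps_hadamard A S) z) - \<beta>"
proof -
  define u where "u = eval_fps (fps_hadamard B S) z"
  define \<epsilon> where "\<epsilon> = - cnj (sgn u)"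
  have "norm \<epsilon> \<le> 1"
    by (simp add: \<epsilon>_def norm_sgn)
  have "cnj u * u = of_real (cmod u) ^ 2"
    using complex_norm_square[of u] by (simp add: mult.commute)
  then have \<epsilon>u: "\<epsilon> * u = - of_real (cmod u)"
    by (cases "u = 0") (simp_all add: \<epsilon>_def sgn_div_norm scaleR_conv_of_real power2_eq_square field_simps)
  define P where "P = A + fps_const \<epsilon> * B"
  have radius: "norm w < fps_conv_radius A" "norm w < fps_conv_radius B"
    "norm w < fps_conv_radius (fps_hadamard A S)" "norm w < fps_conv_radius (fps_hadamard B S)"
    if "norm w < 1" for w :: complex
    using that assms(1-3) fps_conv_radius_hadamard[OF assms(1,3)] fps_conv_radius_hadamard[OF assms(2,3)]
    by (simp_all add: ereal_less_fps_conv_radius)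
  have "fps_conv_radius (fps_const \<epsilon> * B) \<ge> 1"
    using fps_conv_radius_mult[of "fps_const \<epsilon>" B] assms(2) by simp
  then have "fps_conv_radius P \<ge> 1"
    using fps_conv_radius_add[of A "fps_const \<epsilon> * B"] assms(1) unfolding P_def
    by (auto intro: order.trans[rotated])
  have "Re (eval_fps P w) > \<beta>" if "norm w < 1" for w
  proof -
    have "Re (\<epsilon> * eval_fps B w) \<ge> - cmod (eval_fps B w)"
      using abs_Re_le_cmod[of "\<epsilon> * eval_fps B w"] \<open>norm \<epsilon> \<le> 1\<close>
        mult_left_le_one_le[of "cmod (eval_fps B w)" "cmod \<epsilon>"]
      by (simp add: norm_mult)
    then show ?thesis
      using dominated[OF that] eval_fps_add_cmult[OF radius(1,2)[OF that]] by (simp add: P_def)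
  qed
  have "fps_hadamard P S = fps_hadamard A S + fps_const \<epsilon> * fps_hadamard B S"
    by (simp add: P_def fps_ext algebra_simps)
  then have "eval_fps (fps_hadamard P S) z = eval_fps (fps_hadamard A S) z - of_real (cmod u)"
    using eval_fps_add_cmult[OF radius(3,4)[OF \<open>norm z < 1\<close>]] \<epsilon>u by (simp add: u_def)
  moreover have "Re (eval_fps (fps_hadamard P S) z) > \<beta>"
    by (rule Re_eval_fps_hadamard_gt) fact+
  ultimately show ?thesis by (simp add: u_def)
qed

lemma deriv_cong_open:
  assumes "open S" and "\<And>w. w \<in> S \<Longrightarrow> f w = g w" and "z \<in> S"
  shows "deriv f z = deriv g z"
proof (rule deriv_cong_ev[OF _ refl])
  show "\<forall>\<^sub>F w in nhds z. f w = g w"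
    using eventually_nhds_in_open[OF assms(1,3)] by eventually_elim (use assms(2) in auto)
qed

definition fps_deriv_alpha :: "real \<Rightarrow> complex fps \<Rightarrow> complex fps" where
  "fps_deriv_alpha \<alpha> X = fps_deriv X + fps_const (of_real \<alpha>) * (fps_X * fps_deriv (fps_deriv X))"

lemma fps_deriv_alpha_nth:
  "fps_nth (fps_deriv_alpha \<alpha> X) n = of_nat (n + 1) * (1 + of_real \<alpha> * of_nat n) * fps_nth X (n + 1)"
proof (cases n)
  case (Suc m)
  then show ?thesis by (simp add: fps_deriv_alpha_def algebra_simps)
qed (simp add: fps_deriv_alpha_def)

lemma fps_conv_radius_deriv_alpha: "fps_conv_radius (fps_deriv_alpha \<alpha> X) \<ge> fps_conv_radius X"
proof -
  let ?X2 = "fps_deriv (fps_deriv X)"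
  have "fps_conv_radius X \<le> fps_conv_radius (fps_deriv X)"
    by (rule fps_conv_radius_deriv)
  also have "\<dots> \<le> fps_conv_radius ?X2"
    by (rule fps_conv_radius_deriv)
  also have "\<dots> \<le> fps_conv_radius (fps_X * ?X2)"
    using fps_conv_radius_mult[of fps_X ?X2] by simp
  also have "\<dots> \<le> fps_conv_radius (fps_const (of_real \<alpha>) * (fps_X * ?X2))"
    using fps_conv_radius_mult[of "fps_const (of_real \<alpha>)" "fps_X * ?X2"] by simp
  finally have "fps_conv_radius X \<le> min (fps_conv_radius (fps_deriv X))
                  (fps_conv_radius (fps_const (of_real \<alpha>) * (fps_X * ?X2)))"
    using fps_conv_radius_deriv[of X] by simp
  also have "\<dots> \<le> fps_conv_radius (fps_deriv_alpha \<alpha> X)"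
    unfolding fps_deriv_alpha_def by (rule fps_conv_radius_add)
  finally show ?thesis .
qed

lemma eval_fps_deriv_alpha:
  assumes "norm z < fps_conv_radius X"
  shows "eval_fps (fps_deriv_alpha \<alpha> X) z = deriv (eval_fps X) z + of_real \<alpha> * z * deriv (deriv (eval_fps X)) z"
proof -
  have radius: "norm z < fps_conv_radius (fps_deriv X)" "norm z < fps_conv_radius (fps_deriv (fps_deriv X))"
    using assms fps_conv_radius_deriv[of X] fps_conv_radius_deriv[of "fps_deriv X"]
    by (auto intro: order.strict_trans2)
  then have "norm z < fps_conv_radius (fps_X * fps_deriv (fps_deriv X))"
    using fps_conv_radius_mult[of fps_X "fps_deriv (fps_deriv X)"] by (simp add: order.strict_trans2)
  then have "eval_fps (fps_deriv_alpha \<alpha> X) z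
      = eval_fps (fps_deriv X) z + of_real \<alpha> * z * eval_fps (fps_deriv (fps_deriv X)) z"
    using radius by (simp add: fps_deriv_alpha_def eval_fps_add_cmult eval_fps_mult)
  moreover have "deriv (deriv (eval_fps X)) z = eval_fps (fps_deriv (fps_deriv X)) z"
  proof -
    have "deriv (deriv (eval_fps X)) z = deriv (eval_fps (fps_deriv X)) z"
      using assms by (intro deriv_cong_open[of "eball 0 (fps_conv_radius X)"]) (auto simp: eval_fps_deriv)
    also have "\<dots> = eval_fps (fps_deriv (fps_deriv X)) z"
      using radius(1) by (rule eval_fps_deriv[symmetric])
    finally show ?thesis .
  qed
  ultimately show ?thesis
    using assms by (simp add: eval_fps_deriv)
qed

lemma fps_deriv_alpha_hadamard:
  "fps_deriv_alpha \<alpha> (fps_hadamard A C) = fps_hadamard (fps_deriv_alpha \<alpha> A) (fps_shift 1 C)"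
  by (simp add: fps_eq_iff fps_deriv_alpha_nth)

lemma fps_expansion_unit_disc:
  assumes "f holomorphic_on ball 0 1"
  shows "fps_conv_radius (fps_expansion f 0) \<ge> 1"
    and "\<And>z. z \<in> ball 0 1 \<Longrightarrow> eval_fps (fps_expansion f 0) z = f z"
  using conv_radius_fps_expansion[of f 0 1] eval_fps_expansion'[of f 0 1] assms
  by (simp_all add: one_ereal_def)

lemma hadamard_eq_eval_fps_hadamard:
  "hadamard f g = eval_fps (fps_hadamard (fps_expansion f 0) (fps_expansion g 0))"
  by (simp add: hadamard_def taylor_coeff_def fps_expansion_def eval_fps_def fun_eq_iff)

lemma W_H0_cong:
  assumes h: "\<And>z. z \<in> ball 0 1 \<Longrightarrow> h z = h' z" and g: "\<And>z. z \<in> ball 0 1 \<Longrightarrow> g z = g' z"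
  shows "W_H0 \<alpha> \<beta> h g \<longleftrightarrow> W_H0 \<alpha> \<beta> h' g'"
proof -
  have dh: "deriv h z = deriv h' z" and dg: "deriv g z = deriv g' z" if "z \<in> ball 0 1" for z
    using deriv_cong_open[OF open_ball h that] deriv_cong_open[OF open_ball g that] by simp_all
  have ddh: "deriv (deriv h) z = deriv (deriv h') z" and ddg: "deriv (deriv g) z = deriv (deriv g') z"
    if "z \<in> ball 0 1" for z
    using deriv_cong_open[OF open_ball dh that] deriv_cong_open[OF open_ball dg that] by simp_all
  have "h holomorphic_on ball 0 1 \<longleftrightarrow> h' holomorphic_on ball 0 1"
    and "g holomorphic_on ball 0 1 \<longleftrightarrow> g' holomorphic_on ball 0 1"
    using holomorphic_cong[OF refl, of "ball 0 1" h h'] holomorphic_cong[OF refl, of "ball 0 1" g g'] h g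
    by blast+
  then have "in_H0 h g \<longleftrightarrow> in_H0 h' g'"
    unfolding in_H0_def using h[of 0] g[of 0] dh[of 0] dg[of 0] by simp
  moreover have "(\<forall>z\<in>ball 0 1. Re (deriv h z + of_real \<alpha> * z * deriv (deriv h) z - of_real \<beta>)
                  > cmod (deriv g z + of_real \<alpha> * z * deriv (deriv g) z))
      \<longleftrightarrow> (\<forall>z\<in>ball 0 1. Re (deriv h' z + of_real \<alpha> * z * deriv (deriv h') z - of_real \<beta>)
                  > cmod (deriv g' z + of_real \<alpha> * z * deriv (deriv g') z))"
    by (rule ball_cong) (simp_all only: dh dg ddh ddg)
  ultimately show ?thesis
    unfolding W_H0_def by simp
qed

lemma W_H0_eval_fps_iff:
  fixes A B :: "complex fps"
  assumes "fps_conv_radius A \<ge> 1" and "fps_conv_radius B \<ge> 1"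
  shows "W_H0 \<alpha> \<beta> (eval_fps A) (eval_fps B) \<longleftrightarrow>
    fps_nth A 0 = 0 \<and> fps_nth A 1 = 1 \<and> fps_nth B 0 = 0 \<and> fps_nth B 1 = 0 \<and>
    (\<forall>z. norm z < 1 \<longrightarrow> cmod (eval_fps (fps_deriv_alpha \<alpha> B) z) < Re (eval_fps (fps_deriv_alpha \<alpha> A) z) - \<beta>)"
proof -
  have radius: "norm z < fps_conv_radius A" "norm z < fps_conv_radius B" if "norm z < 1" for z :: complex
    using assms that by (simp_all add: ereal_less_fps_conv_radius)
  have "eval_fps A holomorphic_on ball 0 1" "eval_fps B holomorphic_on ball 0 1"
    using assms by (auto intro!: holomorphic_on_eval_fps ball_eball_mono simp: one_ereal_def)
  moreover have "deriv (eval_fps A) 0 = fps_nth A 1" "deriv (eval_fps B) 0 = fps_nth B 1"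
    using radius[of 0] by (simp_all flip: eval_fps_deriv add: eval_fps_at_0)
  ultimately show ?thesis
    using radius unfolding W_H0_def in_H0_def
    by (auto simp: eval_fps_at_0 eval_fps_deriv_alpha)
qed

lemma Re_eval_fps_shift_expansion_gt:
  assumes "\<phi> holomorphic_on ball 0 1" and "\<phi> 0 = 0" and "deriv \<phi> 0 = 1"
    and Re_gt: "\<forall>z\<in>ball 0 1. z \<noteq> 0 \<longrightarrow> Re (\<phi> z / z) > 1/2" and "norm w < 1"
  shows "Re (eval_fps (fps_shift 1 (fps_expansion \<phi> 0)) w) > 1/2"
proof -
  define C where "C = fps_expansion \<phi> 0"
  have "fps_nth C 0 = 0" "fps_nth C 1 = 1"
    using assms(2,3) by (simp_all add: C_def fps_expansion_def)
  then have "subdegree C \<ge> 1"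
    by (intro subdegree_geI) auto
  moreover have "norm w < fps_conv_radius C"
    using fps_expansion_unit_disc(1)[OF assms(1)] \<open>norm w < 1\<close> by (simp add: C_def ereal_less_fps_conv_radius)
  then have "eval_fps (fps_shift 1 C) w = (if w = 0 then fps_nth C 1 else eval_fps C w / w ^ 1)"
    using \<open>subdegree C \<ge> 1\<close> by (intro eval_fps_shift)
  then have "eval_fps (fps_shift 1 C) w = (if w = 0 then 1 else \<phi> w / w)"
    using fps_expansion_unit_disc(2)[OF assms(1)] \<open>fps_nth C 1 = 1\<close> \<open>norm w < 1\<close>
    by (simp add: C_def)
  then show ?thesis
    using Re_gt \<open>norm w < 1\<close> by (simp add: C_def)
qed

lemma W_H0_eval_fps_hadamard:
  fixes A B C :: "complex fps"
  assumes "fps_conv_radius A \<ge> 1" and "fps_conv_radius B \<ge> 1" and "fps_conv_radius C \<ge> 1"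
    and "W_H0 \<alpha> \<beta> (eval_fps A) (eval_fps B)" and "fps_nth C 1 = 1"
    and C: "\<And>w. norm w < 1 \<Longrightarrow> Re (eval_fps (fps_shift 1 C) w) > 1/2"
  shows "W_H0 \<alpha> \<beta> (eval_fps (fps_hadamard A C)) (eval_fps (fps_hadamard B C))"
proof -
  have "fps_nth A 0 = 0" "fps_nth A 1 = 1" "fps_nth B 0 = 0" "fps_nth B 1 = 0"
    and dominated: "\<And>w. norm w < 1 \<Longrightarrow>
       cmod (eval_fps (fps_deriv_alpha \<alpha> B) w) < Re (eval_fps (fps_deriv_alpha \<alpha> A) w) - \<beta>"
    using assms(4) W_H0_eval_fps_iff[OF assms(1,2)] by auto
  moreover have "cmod (eval_fps (fps_deriv_alpha \<alpha> (fps_hadamard B C)) z)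
      < Re (eval_fps (fps_deriv_alpha \<alpha> (fps_hadamard A C)) z) - \<beta>" if "norm z < 1" for z
    unfolding fps_deriv_alpha_hadamard
  proof (rule fps_hadamard_dominated[OF _ _ _ _ C dominated that])
    show "fps_conv_radius (fps_deriv_alpha \<alpha> A) \<ge> 1" "fps_conv_radius (fps_deriv_alpha \<alpha> B) \<ge> 1"
      using assms(1,2) fps_conv_radius_deriv_alpha order.trans by metis+
  qed (use assms(3,5) in simp_all)
  ultimately show ?thesis
    using assms(1-3,5) by (subst W_H0_eval_fps_iff) (simp_all add: fps_conv_radius_hadamard)
qed

theorem theorem4p7:
  fixes \<alpha> \<beta> :: real and h g \<phi> :: "complex \<Rightarrow> complex"
  assumes "\<alpha> \<ge> 0" and "0 \<le> \<beta>" and "\<beta> < 1"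
    and "W_H0 \<alpha> \<beta> h g"
    and "\<phi> holomorphic_on ball 0 1" and "\<phi> 0 = 0" and "deriv \<phi> 0 = 1"
    and "\<forall>z\<in>ball 0 1. z \<noteq> 0 \<longrightarrow> Re (\<phi> z / z) > 1/2"
  shows "W_H0 \<alpha> \<beta> (hadamard h \<phi>) (hadamard g \<phi>)"
proof -
  have "h holomorphic_on ball 0 1" "g holomorphic_on ball 0 1"
    using assms(4) by (simp_all add: W_H0_def in_H0_def)
  note expansions = fps_expansion_unit_disc[OF this(1)] fps_expansion_unit_disc[OF this(2)]
    fps_expansion_unit_disc[OF assms(5)]
  have "W_H0 \<alpha> \<beta> (eval_fps (fps_expansion h 0)) (eval_fps (fps_expansion g 0))"
    using assms(4) W_H0_cong[of "eval_fps (fps_expansion h 0)" h "eval_fps (fps_expansion g 0)" g] expansions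
    by simp
  moreover have "fps_nth (fps_expansion \<phi> 0) 1 = 1"
    using assms(7) by (simp add: fps_expansion_def)
  ultimately show ?thesis
    unfolding hadamard_eq_eval_fps_hadamard
    using W_H0_eval_fps_hadamard expansions Re_eval_fps_shift_expansion_gt[OF assms(5-8)] by blast
qed

end
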